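(* Let $X$ be a compact metric space and let $f:X\to X$ be a continuous function such that every accumulation point of $X$ is a fixed point of $f$. If $V,W\subseteq X$ are nonempty open sets such that $\overline V\cap\overline W=\emptyset$, then the set $\{x\in X: x\in V \text{ and } f(x)\in W\}$ is finite.
   Context: An accumulation point of $X$ is a non-isolated point of $X$; a point $x$ is fixed if $f(x)=x$. *)

theory Defs
  imports "HOL-Analysis.Analysis"
begin

end

theory Submission
  imports Defs
begin

(* An infinite set of such points would have an accumulation point p in the compact space X.
   Then p is fixed, but by continuity p lies in the closure of V while f p lies in the
   closure of W, and these closures are disjoint. *)

lemma finite_points_mapped_between_disjoint_closures:
  fixes X :: "'a::metric_space set" and f :: "'a \<Rightarrow> 'a"
  assumes "compact X" and "continuous_on X f"
    and limpt_fixed: "\<forall>x\<in>X. x islimpt X \<longrightarrow> f x = x"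
    and disjoint: "closure V \<inter> closure W = {}"
  shows "finite {x \<in> X. x \<in> V \<and> f x \<in> W}" (is "finite ?S")
proof (rule ccontr)
  assume "infinite ?S"
  then obtain p where "p \<in> X" and p_limpt: "p islimpt ?S"
    using Heine_Borel_imp_Bolzano_Weierstrass[OF \<open>compact X\<close>] by blast
  then have "f p = p"
    using limpt_fixed islimpt_subset[of p ?S X] by blast
  have p_closure: "p \<in> closure ?S"
    using p_limpt by (simp add: closure_def)
  have "closure ?S \<subseteq> X"
    using closure_minimal[of ?S X] compact_imp_closed[OF \<open>compact X\<close>] by blast
  then have "continuous_on (closure ?S) f"
    using \<open>continuous_on X f\<close> continuous_on_subset by blast
  then have "f ` closure ?S \<subseteq> closure W"
    by (rule image_closure_subset) (use closure_subset in auto)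
  then have "f p \<in> closure W"
    using p_closure by blast
  moreover have "p \<in> closure V"
    using p_closure closure_mono[of ?S V] by blast
  ultimately show False
    using \<open>f p = p\<close> disjoint by auto
qed

theorem lemma3p3:
  fixes X :: "'a::metric_space set" and f :: "'a \<Rightarrow> 'a" and V W :: "'a set"
  assumes "compact X"
    and "continuous_on X f" and "f ` X \<subseteq> X"
    and "\<forall>x\<in>X. x islimpt X \<longrightarrow> f x = x"
    and "openin (top_of_set X) V" and "openin (top_of_set X) W"
    and "V \<noteq> {}" and "W \<noteq> {}"
    and "closure V \<inter> closure W = {}"
  shows "finite {x \<in> X. x \<in> V \<and> f x \<in> W}"
  using finite_points_mapped_between_disjoint_closures assms(1,2,4,9) .

end
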